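(* Let $A$ be a complex semisimple Banach algebra with a unit. Then $\mathrm{Soc}(A)$ is infinite-dimensional if and only if every element of $\mathrm{Soc}(A)$ is a topological divisor of zero in the normed algebra $\mathrm{Soc}(A)$ (with the norm inherited from $A$). *)

theory Defs
  imports "HOL-Analysis.Analysis"
begin

text \<open>A complex unital Banach algebra: a real unital Banach algebra (type class
  banach + real_normed_algebra_1) together with a complex scalar multiplication
  sc extending the real one, compatible with the norm and with the product.\<close>

definition complex_banach_algebra_1 ::
  "(complex \<Rightarrow> 'a::{banach,real_normed_algebra_1} \<Rightarrow> 'a) \<Rightarrow> bool" where
  "complex_banach_algebra_1 sc \<longleftrightarrow>
     (\<forall>c d x. sc c (sc d x) = sc (c * d) x) \<and>
     (\<forall>x. sc 1 x = x) \<and>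
     (\<forall>c x y. sc c (x + y) = sc c x + sc c y) \<and>
     (\<forall>c d x. sc (c + d) x = sc c x + sc d x) \<and>
     (\<forall>r x. sc (complex_of_real r) x = scaleR r x) \<and>
     (\<forall>c x. norm (sc c x) = cmod c * norm x) \<and>
     (\<forall>c x y. sc c (x * y) = sc c x * y \<and> sc c (x * y) = x * sc c y)"

definition left_ideal :: "(complex \<Rightarrow> 'a::real_normed_algebra_1 \<Rightarrow> 'a) \<Rightarrow> 'a set \<Rightarrow> bool" where
  "left_ideal sc L \<longleftrightarrow> 0 \<in> L \<and> (\<forall>x\<in>L. \<forall>y\<in>L. x + y \<in> L) \<and>
     (\<forall>c. \<forall>x\<in>L. sc c x \<in> L) \<and> (\<forall>a. \<forall>x\<in>L. a * x \<in> L)"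

definition minimal_left_ideal :: "(complex \<Rightarrow> 'a::real_normed_algebra_1 \<Rightarrow> 'a) \<Rightarrow> 'a set \<Rightarrow> bool" where
  "minimal_left_ideal sc L \<longleftrightarrow> left_ideal sc L \<and> L \<noteq> {0} \<and>
     (\<forall>J. left_ideal sc J \<and> J \<subseteq> L \<and> J \<noteq> {0} \<longrightarrow> J = L)"

definition maximal_left_ideal :: "(complex \<Rightarrow> 'a::real_normed_algebra_1 \<Rightarrow> 'a) \<Rightarrow> 'a set \<Rightarrow> bool" where
  "maximal_left_ideal sc L \<longleftrightarrow> left_ideal sc L \<and> L \<noteq> UNIV \<and>
     (\<forall>J. left_ideal sc J \<and> L \<subseteq> J \<and> J \<noteq> UNIV \<longrightarrow> J = L)"

definition jacobson_radical :: "(complex \<Rightarrow> 'a::real_normed_algebra_1 \<Rightarrow> 'a) \<Rightarrow> 'a set" where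
  "jacobson_radical sc = \<Inter> {L. maximal_left_ideal sc L}"

definition semisimple :: "(complex \<Rightarrow> 'a::real_normed_algebra_1 \<Rightarrow> 'a) \<Rightarrow> bool" where
  "semisimple sc \<longleftrightarrow> jacobson_radical sc = {0}"

definition cspan :: "(complex \<Rightarrow> 'a::real_normed_algebra_1 \<Rightarrow> 'a) \<Rightarrow> 'a set \<Rightarrow> 'a set" where
  "cspan sc S = {x. \<exists>F c. finite F \<and> F \<subseteq> S \<and> x = (\<Sum>v\<in>F. sc (c v) v)}"

text \<open>Socle: the sum of all minimal left ideals (= {0} if there are none).\<close>
definition socle :: "(complex \<Rightarrow> 'a::real_normed_algebra_1 \<Rightarrow> 'a) \<Rightarrow> 'a set" where
  "socle sc = cspan sc (\<Union> {L. minimal_left_ideal sc L})"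

definition cfinite_dim :: "(complex \<Rightarrow> 'a::real_normed_algebra_1 \<Rightarrow> 'a) \<Rightarrow> 'a set \<Rightarrow> bool" where
  "cfinite_dim sc S \<longleftrightarrow> (\<exists>F. finite F \<and> F \<subseteq> S \<and> S \<subseteq> cspan sc F)"

definition topological_divisor_of_zero_in :: "'a::real_normed_algebra_1 set \<Rightarrow> 'a \<Rightarrow> bool" where
  "topological_divisor_of_zero_in B a \<longleftrightarrow>
     (\<exists>z. (\<forall>n. z n \<in> B \<and> norm (z n) = 1) \<and>
          ((\<lambda>n. a * z n) \<longlonglongrightarrow> 0 \<or> (\<lambda>n. z n * a) \<longlonglongrightarrow> 0))"

end

theory Submission
  imports Defs "HOL-Complex_Analysis.Cauchy_Integral_Formula"
begin

text \<open>If the socle is finite-dimensional, it is spanned by finitely many elements of minimal left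
  ideals \<open>A f\<close> with \<open>f\<close> a minimal idempotent, and these idempotents can be merged into one
  idempotent \<open>e\<close> of the socle that is a two-sided unit of it; a unit is no topological divisor
  of zero. Conversely, for \<open>a\<close> in the socle the sandwich \<open>z \<mapsto> a z a\<close> has finite-dimensional
  range, because \<open>a\<close> is a finite sum of elements of the \<open>A f\<close> and each corner \<open>g A f\<close> between
  minimal idempotents is at most one-dimensional (Gelfand--Mazur in \<open>f A f\<close>). So if the socle
  is infinite-dimensional, the sandwich is not injective on it, and \<open>a\<close> has a genuine zero
  divisor \<open>z\<close> in the socle, whose normalisation gives a constant sequence witnessing that \<open>a\<close> is
  a topological divisor of zero.\<close>

section \<open>A norming functional\<close>

text \<open>A real Hahn--Banach theorem for the norm, by Zorn's lemma on graphs: a set of pairs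
  \<open>(x, a)\<close> closed under addition and real scaling is the graph of a linear functional on a
  subspace (see \<open>norm_dominated_graph_unique\<close>), and a maximal such graph is total.\<close>

definition norm_dominated_graph :: "'a::real_normed_vector \<Rightarrow> ('a \<times> real) set \<Rightarrow> bool" where
  "norm_dominated_graph y0 G \<longleftrightarrow> (y0, norm y0) \<in> G \<and>
     (\<forall>x a y b. (x, a) \<in> G \<longrightarrow> (y, b) \<in> G \<longrightarrow> (x + y, a + b) \<in> G) \<and>
     (\<forall>x a r. (x, a) \<in> G \<longrightarrow> (r *\<^sub>R x, r * a) \<in> G) \<and>
     (\<forall>x a. (x, a) \<in> G \<longrightarrow> a \<le> norm x)"

lemma norm_dominated_graph_add:
  "norm_dominated_graph y0 G \<Longrightarrow> (x, a) \<in> G \<Longrightarrow> (y, b) \<in> G \<Longrightarrow> (x + y, a + b) \<in> G"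
  unfolding norm_dominated_graph_def by blast

lemma norm_dominated_graph_scaleR:
  "norm_dominated_graph y0 G \<Longrightarrow> (x, a) \<in> G \<Longrightarrow> (r *\<^sub>R x, r * a) \<in> G"
  unfolding norm_dominated_graph_def by blast

lemma norm_dominated_graph_le: "norm_dominated_graph y0 G \<Longrightarrow> (x, a) \<in> G \<Longrightarrow> a \<le> norm x"
  unfolding norm_dominated_graph_def by blast

lemma norm_dominated_graph_base: "norm_dominated_graph y0 G \<Longrightarrow> (y0, norm y0) \<in> G"
  unfolding norm_dominated_graph_def by blast

lemma norm_dominated_graph_zero: "norm_dominated_graph y0 G \<Longrightarrow> (0, 0) \<in> G"
  using norm_dominated_graph_scaleR[of y0 G y0 "norm y0" 0] norm_dominated_graph_base[of y0 G]
  by simp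

lemma norm_dominated_graph_unique:
  assumes G: "norm_dominated_graph y0 G" and "(x, a) \<in> G" "(x, b) \<in> G"
  shows "a = b"
proof -
  have "(x + (-1) *\<^sub>R x, a + (-1) * b) \<in> G" "(x + (-1) *\<^sub>R x, b + (-1) * a) \<in> G"
    using assms norm_dominated_graph_add[OF G] norm_dominated_graph_scaleR[OF G] by blast+
  then have "a - b \<le> 0" "b - a \<le> 0" using norm_dominated_graph_le[OF G] by fastforce+
  then show ?thesis by simp
qed

lemma norm_dominated_graph_line:
  "norm_dominated_graph y0 ((\<lambda>r. (r *\<^sub>R y0, r * norm y0)) ` UNIV)"
  unfolding norm_dominated_graph_def image_iff
  by (auto simp: abs_mult_pos mult_right_mono intro: exI[of _ 1])
    (metis scaleR_add_left distrib_right)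

lemma norm_dominated_graph_chain_bound:
  fixes y0 :: "'a::real_normed_vector"
  assumes C: "C \<in> chains {G. norm_dominated_graph y0 G}"
  shows "\<exists>U\<in>{G. norm_dominated_graph y0 G}. \<forall>X\<in>C. X \<subseteq> U"
proof (cases "C = {}")
  case True
  then show ?thesis using norm_dominated_graph_line by blast
next
  case False
  have CG: "\<And>X. X \<in> C \<Longrightarrow> norm_dominated_graph y0 X" using chainsD2[OF C] by blast
  have ch: "\<And>X Y. X \<in> C \<Longrightarrow> Y \<in> C \<Longrightarrow> X \<subseteq> Y \<or> Y \<subseteq> X" using chainsD[OF C] by blast
  have "norm_dominated_graph y0 (\<Union>C)"
    unfolding norm_dominated_graph_def
  proof (intro conjI allI impI)
    obtain X where "X \<in> C" using False by blast
    then show "(y0, norm y0) \<in> \<Union>C" using norm_dominated_graph_base[OF CG] by blast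
  next
    fix x a y b assume "(x, a) \<in> \<Union>C" "(y, b) \<in> \<Union>C"
    then obtain X Y where XY: "X \<in> C" "Y \<in> C" "(x, a) \<in> X" "(y, b) \<in> Y" by blast
    then show "(x + y, a + b) \<in> \<Union>C"
      using ch[OF XY(1,2)] norm_dominated_graph_add[OF CG[OF XY(1)]]
        norm_dominated_graph_add[OF CG[OF XY(2)]] by blast
  next
    fix x a t assume "(x, a) \<in> \<Union>C"
    then obtain X where "X \<in> C" "(x, a) \<in> X" by blast
    then show "(t *\<^sub>R x, t * a) \<in> \<Union>C" using norm_dominated_graph_scaleR[OF CG] by blast
  next
    fix x a assume "(x, a) \<in> \<Union>C"
    then obtain X where "X \<in> C" "(x, a) \<in> X" by blast
    then show "a \<le> norm x" using norm_dominated_graph_le[OF CG] by blast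
  qed
  then show ?thesis by blast
qed

lemma norm_dominated_graph_extension_bounds:
  fixes y0 :: "'a::real_normed_vector"
  assumes M: "norm_dominated_graph y0 M"
  obtains c where "\<And>u a. (u, a) \<in> M \<Longrightarrow> a - norm (u - z) \<le> c"
    "\<And>w b. (w, b) \<in> M \<Longrightarrow> c \<le> norm (w + z) - b"
proof -
  define T where "T = {a - norm (u - z) | u a. (u, a) \<in> M}"
  have key: "a - norm (u - z) \<le> norm (w + z) - b" if "(u, a) \<in> M" "(w, b) \<in> M" for u a w b
  proof -
    have "a + b \<le> norm ((u - z) + (w + z))"
      using norm_dominated_graph_le[OF M norm_dominated_graph_add[OF M that]] by simp
    also have "\<dots> \<le> norm (u - z) + norm (w + z)" by (rule norm_triangle_ineq)
    finally show ?thesis by simp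
  qed
  have "T \<noteq> {}" unfolding T_def using norm_dominated_graph_zero[OF M] by blast
  moreover have "bdd_above T" unfolding T_def bdd_above_def
    using key[OF _ norm_dominated_graph_zero[OF M]] by (intro exI[of _ "norm (0 + z) - 0"]) blast
  ultimately show ?thesis
    using that[of "Sup T"] cSup_upper[of _ T] cSup_least[of T] key unfolding T_def by blast
qed

lemma norm_dominated_graph_extension_le:
  fixes y0 :: "'a::real_normed_vector"
  assumes M: "norm_dominated_graph y0 M" and xa: "(x, a) \<in> M"
    and c1: "\<And>u a. (u, a) \<in> M \<Longrightarrow> a - norm (u - z) \<le> c"
    and c2: "\<And>w b. (w, b) \<in> M \<Longrightarrow> c \<le> norm (w + z) - b"
  shows "a + t * c \<le> norm (x + t *\<^sub>R z)"
proof (cases t "0::real" rule: linorder_cases)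
  case equal
  then show ?thesis using norm_dominated_graph_le[OF M xa] by simp
next
  case greater
  have "t * c \<le> t * (norm ((1/t) *\<^sub>R x + z) - (1/t) * a)"
    using c2[OF norm_dominated_graph_scaleR[OF M xa, of "1/t"]] greater by (simp add: mult_left_mono)
  also have "\<dots> = norm (t *\<^sub>R ((1/t) *\<^sub>R x + z)) - a"
    using greater by (simp add: right_diff_distrib)
  also have "t *\<^sub>R ((1/t) *\<^sub>R x + z) = x + t *\<^sub>R z" using greater by (simp add: scaleR_add_right)
  finally show ?thesis by simp
next
  case less
  define s where "s = - t"
  have s: "s > 0" using less s_def by simp
  have "s * ((1/s) * a - norm ((1/s) *\<^sub>R x - z)) \<le> s * c"
    using c1[OF norm_dominated_graph_scaleR[OF M xa, of "1/s"]] s by (simp add: mult_left_mono)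
  then have "a - norm (s *\<^sub>R ((1/s) *\<^sub>R x - z)) \<le> s * c" using s by (simp add: right_diff_distrib)
  also have "s *\<^sub>R ((1/s) *\<^sub>R x - z) = x + t *\<^sub>R z" using s s_def by (simp add: scaleR_diff_right)
  finally show ?thesis using s_def by simp
qed

lemma norm_dominated_graph_extend:
  fixes y0 :: "'a::real_normed_vector"
  assumes M: "norm_dominated_graph y0 M" and z: "\<And>a. (z, a) \<notin> M"
  shows "\<exists>M'. norm_dominated_graph y0 M' \<and> M \<subseteq> M' \<and> M' \<noteq> M"
proof -
  obtain c where dom: "\<And>x a t. (x, a) \<in> M \<Longrightarrow> a + t * c \<le> norm (x + t *\<^sub>R z)"
    using norm_dominated_graph_extension_bounds[OF M] norm_dominated_graph_extension_le[OF M]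
    by metis
  define M' where "M' = {(x + t *\<^sub>R z, a + t * c) | x a t. (x, a) \<in> M}"
  have "norm_dominated_graph y0 M'"
    unfolding norm_dominated_graph_def
  proof (intro conjI allI impI)
    show "(y0, norm y0) \<in> M'" unfolding M'_def using norm_dominated_graph_base[OF M]
      by (intro CollectI exI[of _ y0] exI[of _ "norm y0"] exI[of _ 0]) simp
  next
    fix x a y b assume "(x, a) \<in> M'" "(y, b) \<in> M'"
    then obtain x1 a1 t1 x2 a2 t2 where h: "x = x1 + t1 *\<^sub>R z" "a = a1 + t1 * c" "(x1, a1) \<in> M"
      "y = x2 + t2 *\<^sub>R z" "b = a2 + t2 * c" "(x2, a2) \<in> M" unfolding M'_def by blast
    then show "(x + y, a + b) \<in> M'" unfolding M'_def using norm_dominated_graph_add[OF M h(3) h(6)]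
      by (intro CollectI exI[of _ "x1 + x2"] exI[of _ "a1 + a2"] exI[of _ "t1 + t2"])
        (simp add: algebra_simps)
  next
    fix x a r assume "(x, a) \<in> M'"
    then obtain x1 a1 t1 where h: "x = x1 + t1 *\<^sub>R z" "a = a1 + t1 * c" "(x1, a1) \<in> M"
      unfolding M'_def by blast
    then show "(r *\<^sub>R x, r * a) \<in> M'" unfolding M'_def using norm_dominated_graph_scaleR[OF M h(3), of r]
      by (intro CollectI exI[of _ "r *\<^sub>R x1"] exI[of _ "r * a1"] exI[of _ "r * t1"])
        (simp add: algebra_simps)
  next
    fix x a assume "(x, a) \<in> M'"
    then obtain x1 a1 t1 where h: "x = x1 + t1 *\<^sub>R z" "a = a1 + t1 * c" "(x1, a1) \<in> M"
      unfolding M'_def by blast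
    then show "a \<le> norm x" using dom[OF h(3)] by simp
  qed
  moreover have "M \<subseteq> M'" unfolding M'_def by (force intro: exI[of _ 0])
  moreover have "(z, c) \<in> M'" unfolding M'_def using norm_dominated_graph_zero[OF M]
    by (intro CollectI exI[of _ 0] exI[of _ 0] exI[of _ 1]) simp
  ultimately show ?thesis using z by blast
qed

lemma exists_norming_functional:
  fixes y0 :: "'a::real_normed_vector"
  shows "\<exists>\<psi>. bounded_linear \<psi> \<and> \<psi> y0 = norm y0 \<and> (\<forall>x. \<bar>\<psi> x\<bar> \<le> norm x)"
proof -
  obtain M where MG: "norm_dominated_graph y0 M"
    and Mmax: "\<forall>X\<in>{G. norm_dominated_graph y0 G}. M \<subseteq> X \<longrightarrow> X = M"
    using Zorn_Lemma2[of "{G. norm_dominated_graph y0 G}"] norm_dominated_graph_chain_bound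
    by blast
  have tot: "\<exists>a. (x, a) \<in> M" for x
  proof (rule ccontr)
    assume "\<nexists>a. (x, a) \<in> M"
    then show False using norm_dominated_graph_extend[OF MG] Mmax by blast
  qed
  define \<psi> where "\<psi> x = (THE a. (x, a) \<in> M)" for x
  have psi: "(x, \<psi> x) \<in> M" for x
    unfolding \<psi>_def using tot[of x] norm_dominated_graph_unique[OF MG] by (metis theI)
  have psi_eq: "(x, a) \<in> M \<Longrightarrow> \<psi> x = a" for x a
    using norm_dominated_graph_unique[OF MG psi] by blast
  have add: "\<psi> (x + y) = \<psi> x + \<psi> y" for x y
    by (rule psi_eq, rule norm_dominated_graph_add[OF MG psi psi])
  have scale: "\<psi> (r *\<^sub>R x) = r *\<^sub>R \<psi> x" for r x
    by (simp, rule psi_eq, rule norm_dominated_graph_scaleR[OF MG psi])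
  have le: "\<psi> x \<le> norm x" for x by (rule norm_dominated_graph_le[OF MG psi])
  have abs: "\<bar>\<psi> x\<bar> \<le> norm x" for x
  proof -
    have "\<psi> (- x) = - \<psi> x" using scale[of "-1" x] by simp
    then show ?thesis using le[of x] le[of "-x"] by simp
  qed
  have "bounded_linear \<psi>"
    by (rule bounded_linear_intro[of _ 1]) (use add scale abs in auto)
  moreover have "\<psi> y0 = norm y0" by (rule psi_eq, rule norm_dominated_graph_base[OF MG])
  ultimately show ?thesis using abs by blast
qed

section \<open>Spans, left ideals and the socle\<close>

definition minimal_idempotent :: "(complex \<Rightarrow> 'a::real_normed_algebra_1 \<Rightarrow> 'a) \<Rightarrow> 'a \<Rightarrow> bool" where
  "minimal_idempotent sc f \<longleftrightarrow> f * f = f \<and> minimal_left_ideal sc (range (\<lambda>b. b * f))"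

locale complex_banach_algebra =
  fixes sc :: "complex \<Rightarrow> 'a::{banach,real_normed_algebra_1} \<Rightarrow> 'a"
  assumes complex_banach_algebra_1: "complex_banach_algebra_1 sc"
begin

lemma sc_assoc: "sc c (sc d x) = sc (c * d) x"
  using complex_banach_algebra_1 unfolding complex_banach_algebra_1_def by blast

lemma sc_one [simp]: "sc 1 x = x"
  using complex_banach_algebra_1 unfolding complex_banach_algebra_1_def by blast

lemma sc_add_right: "sc c (x + y) = sc c x + sc c y"
  using complex_banach_algebra_1 unfolding complex_banach_algebra_1_def by blast

lemma sc_add_left: "sc (c + d) x = sc c x + sc d x"
  using complex_banach_algebra_1 unfolding complex_banach_algebra_1_def by blast

lemma sc_of_real: "sc (complex_of_real r) x = r *\<^sub>R x"
  using complex_banach_algebra_1 unfolding complex_banach_algebra_1_def by blast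

lemma norm_sc: "norm (sc c x) = cmod c * norm x"
  using complex_banach_algebra_1 unfolding complex_banach_algebra_1_def by blast

lemma sc_mult_left: "sc c (x * y) = sc c x * y"
  using complex_banach_algebra_1 unfolding complex_banach_algebra_1_def by blast

lemma sc_mult_right: "sc c (x * y) = x * sc c y"
  using complex_banach_algebra_1 unfolding complex_banach_algebra_1_def by blast

lemma sc_zero_left [simp]: "sc 0 x = 0"
  using sc_of_real[of 0 x] by simp

lemma sc_zero_right [simp]: "sc c 0 = 0"
  using sc_add_right[of c 0 0] by simp

lemma sc_minus_left: "sc (- c) x = - sc c x"
  by (rule add.inverse_unique[symmetric]) (simp add: sc_add_left[symmetric])

lemma sc_diff_left: "sc (c - d) x = sc c x - sc d x"
  using sc_add_left[of c "-d" x] sc_minus_left by simp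

lemma sc_sum: "sc c (sum g F) = (\<Sum>v\<in>F. sc c (g v))"
  by (induction F rule: infinite_finite_induct) (auto simp: sc_add_right)

lemma sc_Re_Im: "sc c x = Re c *\<^sub>R x + Im c *\<^sub>R sc \<i> x"
proof -
  have "sc c x = sc (complex_of_real (Re c) + complex_of_real (Im c) * \<i>) x"
    by (metis complex_eq mult.commute)
  also have "\<dots> = Re c *\<^sub>R x + Im c *\<^sub>R sc \<i> x"
    by (simp add: sc_add_left sc_assoc[symmetric] sc_of_real)
  finally show ?thesis .
qed

lemma cspan_zero: "0 \<in> cspan sc U"
  unfolding cspan_def by (rule CollectI, rule exI[of _ "{}"]) auto

lemma cspan_base: "x \<in> U \<Longrightarrow> x \<in> cspan sc U"
  unfolding cspan_def by (rule CollectI, rule exI[of _ "{x}"], rule exI[of _ "\<lambda>_. 1"]) auto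

lemma cspan_sc: "x \<in> cspan sc U \<Longrightarrow> sc c x \<in> cspan sc U"
proof -
  assume "x \<in> cspan sc U"
  then obtain F d where F: "finite F" "F \<subseteq> U" "x = (\<Sum>v\<in>F. sc (d v) v)"
    unfolding cspan_def by blast
  have "sc c x = (\<Sum>v\<in>F. sc (c * d v) v)"
    unfolding F(3) sc_sum by (rule sum.cong) (auto simp: sc_assoc)
  then show ?thesis unfolding cspan_def
    by (intro CollectI exI[of _ F] exI[of _ "\<lambda>v. c * d v"]) (use F in auto)
qed

lemma cspan_add: "x \<in> cspan sc U \<Longrightarrow> y \<in> cspan sc U \<Longrightarrow> x + y \<in> cspan sc U"
proof -
  assume "x \<in> cspan sc U" "y \<in> cspan sc U"
  then obtain F1 d1 F2 d2 where F: "finite F1" "F1 \<subseteq> U" "x = (\<Sum>v\<in>F1. sc (d1 v) v)"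
    "finite F2" "F2 \<subseteq> U" "y = (\<Sum>v\<in>F2. sc (d2 v) v)"
    unfolding cspan_def by blast
  define e1 where "e1 v = (if v \<in> F1 then d1 v else 0)" for v
  define e2 where "e2 v = (if v \<in> F2 then d2 v else 0)" for v
  have x: "x = (\<Sum>v\<in>F1 \<union> F2. sc (e1 v) v)"
    unfolding F(3) by (rule sum.mono_neutral_cong_left) (auto simp: F e1_def)
  have y: "y = (\<Sum>v\<in>F1 \<union> F2. sc (e2 v) v)"
    unfolding F(6) by (rule sum.mono_neutral_cong_left) (auto simp: F e2_def)
  have "x + y = (\<Sum>v\<in>F1 \<union> F2. sc (e1 v + e2 v) v)"
    unfolding x y sum.distrib[symmetric] by (simp add: sc_add_left)
  then show ?thesis using F unfolding cspan_def
    by (intro CollectI exI[of _ "F1 \<union> F2"] exI[of _ "\<lambda>v. e1 v + e2 v"]) auto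
qed

lemma cspan_sum: "(\<And>v. v \<in> F \<Longrightarrow> g v \<in> cspan sc U) \<Longrightarrow> sum g F \<in> cspan sc U"
  by (induction F rule: infinite_finite_induct) (auto simp: cspan_zero cspan_add)

lemma cspan_minimal:
  assumes "U \<subseteq> X" "0 \<in> X" "\<And>x y. x \<in> X \<Longrightarrow> y \<in> X \<Longrightarrow> x + y \<in> X"
    "\<And>c x. x \<in> X \<Longrightarrow> sc c x \<in> X"
  shows "cspan sc U \<subseteq> X"
proof
  fix x assume "x \<in> cspan sc U"
  then obtain F d where F: "finite F" "F \<subseteq> U" "x = (\<Sum>v\<in>F. sc (d v) v)"
    unfolding cspan_def by blast
  have "(\<Sum>v\<in>F. sc (d v) v) \<in> X" using F(1,2)
    by (induction F rule: finite_induct) (use assms in auto)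
  then show "x \<in> X" using F by simp
qed

lemma cspan_subset_cspan: "V \<subseteq> cspan sc U \<Longrightarrow> cspan sc V \<subseteq> cspan sc U"
  by (rule cspan_minimal) (auto simp: cspan_zero cspan_add cspan_sc)

lemma cspan_diff: "x \<in> cspan sc U \<Longrightarrow> y \<in> cspan sc U \<Longrightarrow> x - y \<in> cspan sc U"
  using cspan_add[of x U "sc (-1) y"] cspan_sc[of y U "-1"] by (simp add: sc_minus_left)

lemma cspan_scaleR: "x \<in> cspan sc U \<Longrightarrow> r *\<^sub>R x \<in> cspan sc U"
  using cspan_sc[of x U "of_real r"] by (simp add: sc_of_real)

lemma span_subset_cspan: "span U \<subseteq> cspan sc U"
  by (rule span_minimal) (auto simp: subspace_def cspan_base cspan_zero cspan_add cspan_scaleR)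

lemma cspan_subset_span:
  "cspan sc U \<subseteq> span (U \<union> sc \<i> ` U)"
proof -
  let ?V = "span (U \<union> sc \<i> ` U)"
  have "cspan sc U \<subseteq> {x. x \<in> ?V \<and> sc \<i> x \<in> ?V}"
  proof (rule cspan_minimal)
    fix c x assume x: "x \<in> {x. x \<in> ?V \<and> sc \<i> x \<in> ?V}"
    have "sc \<i> (sc c x) = sc (\<i> * c) x" by (simp add: sc_assoc)
    then show "sc c x \<in> {x. x \<in> ?V \<and> sc \<i> x \<in> ?V}"
      using x unfolding sc_Re_Im[of c x] sc_Re_Im[of "\<i> * c" x]
      by (auto intro!: span_add span_diff span_scale)
  qed (auto intro: span_base span_zero span_add simp: sc_add_right)
  then show ?thesis by blast
qed

lemma left_ideal_zero: "left_ideal sc L \<Longrightarrow> 0 \<in> L"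
  unfolding left_ideal_def by blast

lemma left_ideal_add: "left_ideal sc L \<Longrightarrow> x \<in> L \<Longrightarrow> y \<in> L \<Longrightarrow> x + y \<in> L"
  unfolding left_ideal_def by blast

lemma left_ideal_sc: "left_ideal sc L \<Longrightarrow> x \<in> L \<Longrightarrow> sc c x \<in> L"
  unfolding left_ideal_def by blast

lemma left_ideal_mult: "left_ideal sc L \<Longrightarrow> x \<in> L \<Longrightarrow> a * x \<in> L"
  unfolding left_ideal_def by blast

lemma left_ideal_diff: "left_ideal sc L \<Longrightarrow> x \<in> L \<Longrightarrow> y \<in> L \<Longrightarrow> x - y \<in> L"
  using left_ideal_add[of L x "- y"] left_ideal_mult[of L y "- 1"] by simp

lemma left_ideal_zero_set: "left_ideal sc {0}"
  unfolding left_ideal_def by simp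

lemma left_ideal_image_mult_right:
  assumes L: "left_ideal sc L"
  shows "left_ideal sc ((\<lambda>y. y * a) ` L)"
  unfolding left_ideal_def
proof (intro conjI ballI allI)
  show "0 \<in> (\<lambda>y. y * a) ` L" using left_ideal_zero[OF L] by (intro image_eqI[of _ _ 0]) auto
  fix u v assume "u \<in> (\<lambda>y. y * a) ` L" "v \<in> (\<lambda>y. y * a) ` L"
  then obtain p q where "u = p * a" "v = q * a" "p \<in> L" "q \<in> L" by blast
  then show "u + v \<in> (\<lambda>y. y * a) ` L" using left_ideal_add[OF L]
    by (intro image_eqI[of _ _ "p + q"]) (auto simp: distrib_right)
next
  fix c u assume "u \<in> (\<lambda>y. y * a) ` L"
  then obtain p where "u = p * a" "p \<in> L" by blast
  then show "sc c u \<in> (\<lambda>y. y * a) ` L" using left_ideal_sc[OF L]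
    by (intro image_eqI[of _ _ "sc c p"]) (auto simp: sc_mult_left)
next
  fix d u assume "u \<in> (\<lambda>y. y * a) ` L"
  then obtain p where "u = p * a" "p \<in> L" by blast
  then show "d * u \<in> (\<lambda>y. y * a) ` L" using left_ideal_mult[OF L]
    by (intro image_eqI[of _ _ "d * p"]) (auto simp: mult.assoc)
qed

lemma left_ideal_principal: "left_ideal sc (range (\<lambda>b. b * w))"
proof -
  have "left_ideal sc (UNIV :: 'a set)" unfolding left_ideal_def by simp
  from left_ideal_image_mult_right[OF this] show ?thesis .
qed

lemma mem_principal_left_ideal: "w \<in> range (\<lambda>b. b * (w :: 'a))"
  by (rule range_eqI[of _ _ 1]) simp

lemma left_ideal_preimage_mult_right:
  assumes "left_ideal sc L" "left_ideal sc J"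
  shows "left_ideal sc {z \<in> L. z * a \<in> J}"
  using assms unfolding left_ideal_def
  by (auto simp: distrib_right sc_mult_left[symmetric] mult.assoc)

lemma left_ideal_add_principal:
  assumes M: "left_ideal sc M"
  shows "left_ideal sc {m + b * x | m b. m \<in> M}" (is "left_ideal sc ?N")
  unfolding left_ideal_def
proof (intro conjI ballI allI)
  show "0 \<in> ?N" using left_ideal_zero[OF M] by (intro CollectI exI[of _ 0]) auto
  fix u v assume "u \<in> ?N" "v \<in> ?N"
  then obtain m1 b1 m2 b2 where "u = m1 + b1 * x" "v = m2 + b2 * x" "m1 \<in> M" "m2 \<in> M"
    by blast
  then show "u + v \<in> ?N" using left_ideal_add[OF M]
    by (intro CollectI exI[of _ "m1 + m2"] exI[of _ "b1 + b2"]) (auto simp: algebra_simps)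
next
  fix c u assume "u \<in> ?N"
  then obtain m b where "u = m + b * x" "m \<in> M" by blast
  then show "sc c u \<in> ?N" using left_ideal_sc[OF M]
    by (intro CollectI exI[of _ "sc c m"] exI[of _ "sc c b"]) (auto simp: sc_add_right sc_mult_left)
next
  fix a u assume "u \<in> ?N"
  then obtain m b where "u = m + b * x" "m \<in> M" by blast
  then show "a * u \<in> ?N" using left_ideal_mult[OF M]
    by (intro CollectI exI[of _ "a * m"] exI[of _ "a * b"]) (auto simp: algebra_simps)
qed

lemma maximal_left_ideal_contains_square_zero:
  assumes J: "left_ideal sc J" and sq: "\<And>x y. x \<in> J \<Longrightarrow> y \<in> J \<Longrightarrow> x * y = 0"
    and M: "maximal_left_ideal sc M" and x: "x \<in> J"
  shows "x \<in> M"
proof (rule ccontr)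
  assume xM: "x \<notin> M"
  have MI: "left_ideal sc M" and MU: "M \<noteq> UNIV"
    and Mmax: "\<And>N. left_ideal sc N \<Longrightarrow> M \<subseteq> N \<Longrightarrow> N \<noteq> UNIV \<Longrightarrow> N = M"
    using M unfolding maximal_left_ideal_def by blast+
  define N where "N = {m + b * x | m b. m \<in> M}"
  have "left_ideal sc N" unfolding N_def by (rule left_ideal_add_principal[OF MI])
  moreover have "M \<subseteq> N" unfolding N_def by (force intro: exI[of _ 0])
  moreover have "x \<in> N" unfolding N_def using left_ideal_zero[OF MI] by (force intro: exI[of _ 1])
  ultimately have "N = UNIV" using Mmax xM by blast
  then obtain m b where mb: "1 = m + b * x" "m \<in> M" unfolding N_def by blast
  \<comment> \<open>\<open>b x\<close> squares to zero, so \<open>m = 1 - b x\<close> has the left inverse \<open>1 + b x\<close>\<close>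
  have m: "m = 1 - b * x" using mb(1) by (simp add: algebra_simps)
  have "(1 + b * x) * m = 1 - (b * x) * (b * x)" unfolding m by (simp add: algebra_simps)
  then have "(1 + b * x) * m = 1"
    using sq[OF left_ideal_mult[OF J x] left_ideal_mult[OF J x]] by simp
  then have "1 \<in> M" using left_ideal_mult[OF MI mb(2), of "1 + b * x"] by simp
  then have "M = UNIV" using left_ideal_mult[OF MI] by (metis UNIV_eq_I mult.right_neutral)
  then show False using MU by simp
qed

lemma minimal_left_ideal_left_ideal: "minimal_left_ideal sc L \<Longrightarrow> left_ideal sc L"
  unfolding minimal_left_ideal_def by blast

lemma minimal_left_ideal_nonzero:
  assumes "minimal_left_ideal sc L" obtains x where "x \<in> L" "x \<noteq> 0"
  using assms left_ideal_zero[OF minimal_left_ideal_left_ideal[OF assms]]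
  unfolding minimal_left_ideal_def by blast

lemma minimal_left_ideal_eq:
  assumes "minimal_left_ideal sc L" "left_ideal sc J" "J \<subseteq> L" "x \<in> J" "x \<noteq> 0"
  shows "J = L"
  using assms unfolding minimal_left_ideal_def by blast

lemma minimal_left_ideal_image_mult_right:
  assumes L: "minimal_left_ideal sc L" and nz: "(\<lambda>y. y * a) ` L \<noteq> {0}"
  shows "minimal_left_ideal sc ((\<lambda>y. y * a) ` L)"
  unfolding minimal_left_ideal_def
proof (intro conjI allI impI nz)
  have LI: "left_ideal sc L" using minimal_left_ideal_left_ideal[OF L] .
  show "left_ideal sc ((\<lambda>y. y * a) ` L)" using left_ideal_image_mult_right[OF LI] .
  fix J assume J: "left_ideal sc J \<and> J \<subseteq> (\<lambda>y. y * a) ` L \<and> J \<noteq> {0}"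
  obtain j where j: "j \<in> J" "j \<noteq> 0" using J left_ideal_zero[of J] by blast
  then obtain p where p: "p \<in> L" "j = p * a" using J by blast
  have "p \<in> {z \<in> L. z * a \<in> J}" "p \<noteq> 0" using p j by auto
  then have "{z \<in> L. z * a \<in> J} = L"
    using minimal_left_ideal_eq[OF L left_ideal_preimage_mult_right[OF LI J[THEN conjunct1]]]
    by blast
  then show "J = (\<lambda>y. y * a) ` L" using J by blast
qed

lemma minimal_left_ideal_subset_socle:
  "minimal_left_ideal sc L \<Longrightarrow> x \<in> L \<Longrightarrow> x \<in> socle sc"
  unfolding socle_def by (rule cspan_base) blast

lemma socle_zero: "0 \<in> socle sc"
  unfolding socle_def by (rule cspan_zero)

lemma socle_add: "x \<in> socle sc \<Longrightarrow> y \<in> socle sc \<Longrightarrow> x + y \<in> socle sc"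
  unfolding socle_def by (rule cspan_add)

lemma socle_sc: "x \<in> socle sc \<Longrightarrow> sc c x \<in> socle sc"
  unfolding socle_def by (rule cspan_sc)

lemma socle_diff: "x \<in> socle sc \<Longrightarrow> y \<in> socle sc \<Longrightarrow> x - y \<in> socle sc"
  unfolding socle_def by (rule cspan_diff)

lemma socle_scaleR: "x \<in> socle sc \<Longrightarrow> r *\<^sub>R x \<in> socle sc"
  unfolding socle_def by (rule cspan_scaleR)

lemma socle_mult_left:
  assumes "x \<in> socle sc" shows "a * x \<in> socle sc"
proof -
  have "a * u \<in> socle sc" if "minimal_left_ideal sc L" "u \<in> L" for L u
    using that by (meson left_ideal_mult minimal_left_ideal_left_ideal minimal_left_ideal_subset_socle)
  then have "cspan sc (\<Union> {L. minimal_left_ideal sc L}) \<subseteq> {x. a * x \<in> socle sc}"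
    by (intro cspan_minimal)
      (auto simp: distrib_left sc_mult_right[symmetric] socle_zero socle_add socle_sc)
  then show ?thesis using assms unfolding socle_def by blast
qed

lemma socle_mult_right:
  assumes "x \<in> socle sc" shows "x * a \<in> socle sc"
proof -
  have "u * a \<in> socle sc" if L: "minimal_left_ideal sc L" and u: "u \<in> L" for L u
  proof (cases "(\<lambda>y. y * a) ` L = {0}")
    case True
    then show ?thesis using u socle_zero by (metis image_eqI singletonD)
  next
    case False
    then show ?thesis
      using minimal_left_ideal_subset_socle[OF minimal_left_ideal_image_mult_right[OF L]] u by blast
  qed
  then have "cspan sc (\<Union> {L. minimal_left_ideal sc L}) \<subseteq> {x. x * a \<in> socle sc}"
    by (intro cspan_minimal)
      (auto simp: distrib_right sc_mult_left[symmetric] socle_zero socle_add socle_sc)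
  then show ?thesis using assms unfolding socle_def by blast
qed

section \<open>Minimal idempotents and Gelfand--Mazur\<close>

lemma exists_complex_norming_functional:
  "\<exists>\<phi> :: 'a \<Rightarrow> complex. bounded_linear \<phi> \<and> (\<forall>c x. \<phi> (sc c x) = c * \<phi> x) \<and> Re (\<phi> y0) = norm y0"
proof -
  obtain \<psi> where psi: "bounded_linear \<psi>" "\<psi> y0 = norm y0" "\<And>x. \<bar>\<psi> x\<bar> \<le> norm x"
    using exists_norming_functional[of y0] by blast
  interpret psi: bounded_linear \<psi> by (rule psi(1))
  define \<phi> where "\<phi> x = Complex (\<psi> x) (- \<psi> (sc \<i> x))" for x
  have isc: "sc \<i> (r *\<^sub>R x) = r *\<^sub>R sc \<i> x" for r x
    by (simp add: sc_of_real[symmetric] sc_assoc mult.commute)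
  have "bounded_linear \<phi>"
  proof (rule bounded_linear_intro[of _ 2])
    fix x y show "\<phi> (x + y) = \<phi> x + \<phi> y"
      unfolding \<phi>_def by (simp add: sc_add_right psi.add complex_eq_iff)
  next
    fix r x show "\<phi> (r *\<^sub>R x) = r *\<^sub>R \<phi> x"
      unfolding \<phi>_def by (simp add: isc psi.scaleR complex_eq_iff)
  next
    fix x
    have "cmod (\<phi> x) \<le> \<bar>\<psi> x\<bar> + \<bar>\<psi> (sc \<i> x)\<bar>" using cmod_le[of "\<phi> x"] unfolding \<phi>_def by simp
    also have "\<dots> \<le> norm x + norm (sc \<i> x)" using psi(3) by (intro add_mono) auto
    finally show "norm (\<phi> x) \<le> norm x * 2" by (simp add: norm_sc)
  qed
  moreover have "\<phi> (sc c x) = c * \<phi> x" for c x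
  proof -
    have 1: "\<psi> (sc c x) = Re c * \<psi> x + Im c * \<psi> (sc \<i> x)"
      unfolding sc_Re_Im[of c x] by (simp add: psi.add psi.scaleR)
    have "sc \<i> (sc c x) = sc (\<i> * c) x" by (simp add: sc_assoc)
    then have 2: "\<psi> (sc \<i> (sc c x)) = - Im c * \<psi> x + Re c * \<psi> (sc \<i> x)"
      unfolding sc_Re_Im[of "\<i> * c" x] by (simp add: psi.add psi.diff psi.scaleR)
    show ?thesis unfolding \<phi>_def using 1 2 by (simp add: complex_eq_iff algebra_simps)
  qed
  moreover have "Re (\<phi> y0) = norm y0" unfolding \<phi>_def using psi(2) by simp
  ultimately show ?thesis by blast
qed

lemma pseudo_resolvent_tendsto:
  assumes res: "\<And>l m. r l - r m = sc (l - m) (r l * r m)"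
  shows "(r \<longlongrightarrow> r m) (at m)"
proof -
  have diff: "norm (r l - r m) \<le> cmod (l - m) * (norm (r l) * norm (r m))" for l
    unfolding res norm_sc by (intro mult_left_mono norm_mult_ineq) auto
  define K where "K = norm (r m) + 1"
  have K: "K > 0" unfolding K_def using norm_ge_zero[of "r m"] by linarith
  have "norm (r l - r m) \<le> 2 * K * K * cmod (l - m)" if "cmod (l - m) * K \<le> 1/2" for l
  proof -
    have small: "cmod (l - m) * norm (r m) \<le> 1/2"
      using that mult_left_mono[of "norm (r m)" K "cmod (l - m)"] unfolding K_def by simp
    \<comment> \<open>\<open>r l\<close> stays bounded near \<open>m\<close>, because \<open>\<parallel>r l - r m\<parallel> \<le> \<parallel>r l\<parallel> / 2\<close> there\<close>
    have "norm (r l) \<le> norm (r m) + norm (r l - r m)"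
      by (metis add.commute diff_add_cancel norm_triangle_ineq)
    also have "norm (r l - r m) \<le> (cmod (l - m) * norm (r m)) * norm (r l)"
      using diff[of l] by (simp add: mult_ac)
    also have "\<dots> \<le> 1/2 * norm (r l)" by (rule mult_right_mono[OF small]) simp
    finally have "norm (r l) \<le> 2 * K" unfolding K_def by simp
    then have "cmod (l - m) * (norm (r l) * norm (r m)) \<le> cmod (l - m) * ((2 * K) * K)"
      by (intro mult_left_mono mult_mono) (auto simp: K_def)
    then show ?thesis using diff[of l] by (simp add: mult_ac)
  qed
  then have "\<forall>\<^sub>F l in at m. norm (r l - r m) \<le> 2 * K * K * cmod (l - m)"
    unfolding eventually_at using K
    by (intro exI[of _ "1 / (2 * K)"]) (auto simp: dist_norm field_simps)
  moreover have "((\<lambda>l. 2 * K * K * cmod (l - m)) \<longlongrightarrow> 0) (at m)"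
    by (rule tendsto_eq_intros refl | simp)+
  ultimately have "((\<lambda>l. r l - r m) \<longlongrightarrow> 0) (at m)" by (rule Lim_null_comparison)
  then show ?thesis by (simp add: Lim_null[symmetric])
qed

lemma pseudo_resolvent_has_field_derivative:
  assumes res: "\<And>l m. r l - r m = sc (l - m) (r l * r m)"
    and \<phi>: "bounded_linear \<phi>" "\<And>c x. \<phi> (sc c x) = c * \<phi> x"
  shows "((\<lambda>l. \<phi> (r l)) has_field_derivative \<phi> (r m * r m)) (at m)"
  unfolding has_field_derivative_iff
proof -
  interpret \<phi>: bounded_linear \<phi> by (rule \<phi>(1))
  have "\<forall>\<^sub>F l in at m. \<phi> (r l * r m) = (\<phi> (r l) - \<phi> (r m)) / (l - m)"
    unfolding eventually_at_filter by (simp add: \<phi>.diff[symmetric] res \<phi>(2))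
  moreover have "((\<lambda>l. \<phi> (r l * r m)) \<longlongrightarrow> \<phi> (r m * r m)) (at m)"
    by (intro \<phi>.tendsto tendsto_mult pseudo_resolvent_tendsto[OF res] tendsto_const)
  ultimately show "((\<lambda>l. (\<phi> (r l) - \<phi> (r m)) / (l - m)) \<longlongrightarrow> \<phi> (r m * r m)) (at m)"
    by (rule Lim_transform_eventually[rotated])
qed

lemma tendsto_zero_at_infinity_if_inverse_bound:
  fixes g :: "complex \<Rightarrow> real"
  assumes "\<And>l. (cmod l - C) * g l \<le> B" "\<And>l. g l \<ge> 0"
  shows "(g \<longlongrightarrow> 0) at_infinity"
proof (rule Lim_null_comparison)
  have "filterlim (\<lambda>l. - C + cmod l) at_top at_infinity"
    by (intro filterlim_tendsto_add_at_top[OF tendsto_const]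
        filterlim_at_infinity_imp_norm_at_top filterlim_ident)
  then have "filterlim (\<lambda>l. cmod l - C) at_top at_infinity" by simp
  then have "eventually (\<lambda>l. cmod l - C > 0) at_infinity"
    unfolding filterlim_at_top_dense by (metis diff_gt_0_iff_gt)
  then show "\<forall>\<^sub>F l in at_infinity. norm (g l) \<le> B / (cmod l - C)"
    by eventually_elim (use assms in \<open>simp add: field_simps mult.commute\<close>)
  show "((\<lambda>l. B / (cmod l - C)) \<longlongrightarrow> 0) at_infinity"
    by (intro tendsto_divide_0[OF tendsto_const] filterlim_at_top_imp_at_infinity) fact
qed

text \<open>Gelfand--Mazur in the corner algebra \<open>f A f\<close>, whose unit is \<open>f\<close>: if every \<open>x - l f\<close>
  had an inverse \<open>r l\<close> there, \<open>r\<close> would be a pseudo-resolvent vanishing at infinity, and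
  Liouville's theorem applied to \<open>\<phi> \<circ> r\<close> would force \<open>r 0 = 0\<close>.\<close>

lemma corner_spectrum_nonempty:
  assumes ff: "f * f = f" and f0: "f \<noteq> 0"
  shows "\<exists>l. \<not> (\<exists>u. u = f * u * f \<and> u * (x - sc l f) = f \<and> (x - sc l f) * u = f)"
proof (rule ccontr)
  assume "\<not> ?thesis"
  then obtain r where r: "\<And>l. r l = f * r l * f" "\<And>l. r l * (x - sc l f) = f"
    "\<And>l. (x - sc l f) * r l = f"
    by metis
  have rf: "r l * f = r l" and fr: "f * r l = r l" for l
    using r(1)[of l] ff by (metis mult.assoc)+
  have res: "r l - r m = sc (l - m) (r l * r m)" for l m
  proof -
    have "r l - r m = r l * (x - sc m f) * r m - r l * (x - sc l f) * r m"
      using r(2,3) rf fr by (simp add: mult.assoc)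
    also have "\<dots> = r l * ((x - sc m f) - (x - sc l f)) * r m"
      by (simp only: right_diff_distrib left_diff_distrib)
    also have "(x - sc m f) - (x - sc l f) = sc (l - m) f" by (simp add: sc_diff_left)
    finally show ?thesis
      using rf by (simp add: sc_mult_right[symmetric] sc_mult_left[symmetric] mult.assoc)
  qed
  have bound: "(cmod l - norm x) * norm (r l) \<le> norm f" for l
  proof -
    have "sc l (r l) = r l * x - f"
      using r(2)[of l] rf[of l] by (simp add: right_diff_distrib sc_mult_right[symmetric] algebra_simps)
    then have "cmod l * norm (r l) = norm (r l * x - f)" by (metis norm_sc)
    also have "\<dots> \<le> norm (r l) * norm x + norm f"
      using norm_triangle_ineq4[of "r l * x" f] norm_mult_ineq[of "r l" x] by linarith
    finally show ?thesis by (simp add: algebra_simps)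
  qed
  obtain \<phi> :: "'a \<Rightarrow> complex" where \<phi>: "bounded_linear \<phi>" "\<And>c x. \<phi> (sc c x) = c * \<phi> x"
      "Re (\<phi> (r 0)) = norm (r 0)"
    using exists_complex_norming_functional[of "r 0"] by blast
  interpret \<phi>: bounded_linear \<phi> by (rule \<phi>(1))
  have "(\<lambda>l. \<phi> (r l)) holomorphic_on UNIV"
    using pseudo_resolvent_has_field_derivative[OF res \<phi>(1,2)]
    unfolding holomorphic_on_def field_differentiable_def by blast
  moreover have "((\<lambda>l. \<phi> (r l)) \<longlongrightarrow> 0) at_infinity"
  proof -
    have "((\<lambda>l. norm (r l)) \<longlongrightarrow> 0) at_infinity"
      by (rule tendsto_zero_at_infinity_if_inverse_bound[OF bound]) simp
    then show ?thesis by (intro \<phi>.tendsto_zero) (simp add: tendsto_norm_zero_iff)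
  qed
  ultimately have "\<phi> (r 0) = 0" by (rule Liouville_weak_0)
  moreover have "r 0 \<noteq> 0" using r(2)[of 0] f0 by auto
  ultimately show False using \<phi>(3) by simp
qed

lemma minimal_idempotent_left_ideal_eq:
  assumes f: "minimal_idempotent sc f" and w: "w * f = w" "w \<noteq> 0"
  shows "range (\<lambda>b. b * w) = range (\<lambda>b. b * f)"
proof -
  have "b * w \<in> range (\<lambda>b. b * f)" for b
    using w(1) rangeI[of "\<lambda>b. b * f" "b * w"] by (simp add: mult.assoc)
  then have "range (\<lambda>b. b * w) \<subseteq> range (\<lambda>b. b * f)" by blast
  then show ?thesis
    using f w(2) minimal_left_ideal_eq[OF _ left_ideal_principal _ mem_principal_left_ideal]
    unfolding minimal_idempotent_def by blast
qed

lemma minimal_idempotent_corner_left_inverse: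
  assumes f: "minimal_idempotent sc f" and w: "w = f * w * f" "w \<noteq> 0"
  obtains u where "u = f * u * f" "u * w = f"
proof -
  have ff: "f * f = f" using f unfolding minimal_idempotent_def by blast
  have fw: "f * w = w" and wf: "w * f = w" using w(1) ff by (metis mult.assoc)+
  have "f \<in> range (\<lambda>b. b * w)"
    using minimal_idempotent_left_ideal_eq[OF f wf w(2)] mem_principal_left_ideal by blast
  then obtain b where b: "f = b * w" by blast
  have "f * b * f * w = f" using fw b ff by (simp add: mult.assoc)
  moreover have "f * b * f = f * (f * b * f) * f" using ff by (metis mult.assoc)
  ultimately show ?thesis using that by blast
qed

lemma minimal_idempotent_nonzero: "minimal_idempotent sc f \<Longrightarrow> f \<noteq> 0"
  unfolding minimal_idempotent_def minimal_left_ideal_def by auto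

lemma minimal_idempotent_corner:
  assumes f: "minimal_idempotent sc f"
  obtains c where "f * y * f = sc c f"
proof -
  have ff: "f * f = f" using f unfolding minimal_idempotent_def by blast
  define d where "d = f * y * f"
  obtain l where l: "\<not> (\<exists>u. u = f * u * f \<and> u * (d - sc l f) = f \<and> (d - sc l f) * u = f)"
    using corner_spectrum_nonempty[OF ff minimal_idempotent_nonzero[OF f]] by blast
  define w where "w = d - sc l f"
  have wf: "w = f * w * f" unfolding w_def d_def using ff
    by (simp add: right_diff_distrib left_diff_distrib sc_mult_left[symmetric]
        sc_mult_right[symmetric] mult.assoc) (metis mult.assoc)
  have "w = 0"
  proof (rule ccontr)
    \<comment> \<open>a left inverse \<open>u\<close> of \<open>w\<close> in \<open>f A f\<close> has itself a left inverse, so it is two-sided\<close>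
    assume w0: "w \<noteq> 0"
    obtain u where u: "u = f * u * f" "u * w = f"
      using minimal_idempotent_corner_left_inverse[OF f wf w0] by blast
    have "u \<noteq> 0" using u(2) minimal_idempotent_nonzero[OF f] by auto
    then obtain v where v: "v = f * v * f" "v * u = f"
      using minimal_idempotent_corner_left_inverse[OF f u(1)] by blast
    have "v = v * u * w" using v(1) u(2) ff by (metis mult.assoc)
    also have "\<dots> = w" using v(2) wf ff by (metis mult.assoc)
    finally have "w * u = f" using v(2) by simp
    then show False using l u unfolding w_def by blast
  qed
  then show ?thesis using that unfolding w_def d_def by simp
qed

lemma minimal_idempotents_corner_one_dim:
  assumes f: "minimal_idempotent sc f" and g: "minimal_idempotent sc g"
  obtains w where "\<And>y. \<exists>c. g * y * f = sc c w"
proof (cases "\<forall>y. g * y * f = 0")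
  case True
  then show ?thesis using that[of 0] by simp
next
  case False
  then obtain y0 where w0: "g * y0 * f \<noteq> 0" by blast
  define w where "w = g * y0 * f"
  have ff: "f * f = f" and gg: "g * g = g"
    using f g unfolding minimal_idempotent_def by blast+
  have wf: "w * f = w" and gw: "g * w = w"
    unfolding w_def using ff gg by (simp_all add: mult.assoc flip: mult.assoc[of g g])
  \<comment> \<open>\<open>f \<in> A w\<close>, so \<open>g y f = (g (g y f b) g) w\<close>, and the corner \<open>g A g\<close> is \<open>\<complex> g\<close>\<close>
  obtain b where b: "f = b * w"
    using minimal_idempotent_left_ideal_eq[OF f wf w0[folded w_def]] mem_principal_left_ideal
    by blast
  have "\<exists>c. g * y * f = sc c w" for y
  proof -
    obtain c where c: "g * (g * y * f * b) * g = sc c g" using minimal_idempotent_corner[OF g] .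
    have "g * y * f = g * y * f * b * w" using ff b by (metis mult.assoc)
    also have "\<dots> = g * (g * y * f * b) * g * w" using gg gw by (metis mult.assoc)
    also have "\<dots> = sc c w" using c gw by (simp add: sc_mult_left[symmetric])
    finally show ?thesis by blast
  qed
  then show ?thesis using that by blast
qed

lemma cfinite_dim_if_inj_linear_into_cspan:
  assumes lin: "linear T" and inj: "inj_on T S" and S: "subspace S"
    and Q: "finite Q" "T ` S \<subseteq> cspan sc Q"
  shows "cfinite_dim sc S"
proof -
  obtain B where B: "B \<subseteq> T ` S" "independent B" "T ` S \<subseteq> span B"
    using maximal_independent_subset[of "T ` S"] by blast
  have "finite B"
    using independent_span_bound[OF _ B(2)] B(1) Q cspan_subset_span[of Q] by blast
  define F where "F = inv_into S T ` B"
  have FS: "F \<subseteq> S" unfolding F_def using B(1) by (auto intro: inv_into_into)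
  have TF: "T ` F = B" unfolding F_def using B(1) by (simp add: image_image f_inv_into_f subset_iff)
  have spF: "span F \<subseteq> S" using span_minimal[OF FS S] .
  have "S \<subseteq> span F"
  proof
    fix s assume s: "s \<in> S"
    then have "T s \<in> T ` span F" using B(3) TF span_linear_image[OF lin] by blast
    then obtain s' where s': "s' \<in> span F" "T s = T s'" by blast
    then have "s = s'" using inj s spF unfolding inj_on_def by blast
    then show "s \<in> span F" using s' by simp
  qed
  then show ?thesis
    unfolding cfinite_dim_def using FS F_def \<open>finite B\<close> span_subset_cspan by blast
qed

lemma subspace_socle: "subspace (socle sc)"
  unfolding subspace_def using socle_zero socle_add socle_scaleR by blast

end

section \<open>Semisimple algebras\<close>

locale semisimple_banach_algebra = complex_banach_algebra +
  assumes semisimple: "semisimple sc"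
begin

lemma square_zero_left_ideal_eq_zero:
  assumes J: "left_ideal sc J" and sq: "\<And>x y. x \<in> J \<Longrightarrow> y \<in> J \<Longrightarrow> x * y = 0"
    and x: "x \<in> J"
  shows "x = 0"
proof -
  have "x \<in> jacobson_radical sc"
    unfolding jacobson_radical_def using maximal_left_ideal_contains_square_zero[OF J sq _ x] by blast
  then show ?thesis using semisimple unfolding semisimple_def by blast
qed

lemma minimal_left_ideal_idempotent_generator:
  assumes L: "minimal_left_ideal sc L"
  obtains f where "f * f = f" "f \<in> L" "L = range (\<lambda>b. b * f)"
proof -
  have LI: "left_ideal sc L" using minimal_left_ideal_left_ideal[OF L] .
  obtain x y where xy: "x \<in> L" "y \<in> L" "y * x \<noteq> 0"
  proof -
    obtain z where "z \<in> L" "z \<noteq> 0" using minimal_left_ideal_nonzero[OF L] .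
    then show ?thesis using square_zero_left_ideal_eq_zero[OF LI] that by blast
  qed
  have "(\<lambda>y. y * x) ` L \<subseteq> L" using left_ideal_mult[OF LI xy(1)] by auto
  moreover have "y * x \<in> (\<lambda>y. y * x) ` L" using xy(2) by blast
  ultimately have "(\<lambda>y. y * x) ` L = L"
    using minimal_left_ideal_eq[OF L left_ideal_image_mult_right[OF LI]] xy(3) by blast
  then have "x \<in> (\<lambda>y. y * x) ` L" using xy(1) by simp
  then obtain e where e: "e \<in> L" "e * x = x" by (auto simp: eq_commute)
  have x0: "x \<noteq> 0" using xy(3) by auto
  \<comment> \<open>the left annihilator of \<open>x\<close> in \<open>L\<close> is a proper subideal, hence zero; it contains \<open>e e - e\<close>\<close>
  define K where "K = {z \<in> L. z * x \<in> {0}}"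
  have KI: "left_ideal sc K"
    unfolding K_def by (rule left_ideal_preimage_mult_right[OF LI left_ideal_zero_set])
  have "e \<notin> K" using e x0 unfolding K_def by auto
  then have "K \<noteq> L" using e(1) by blast
  then have K0: "z \<in> K \<Longrightarrow> z = 0" for z
    using minimal_left_ideal_eq[OF L KI] unfolding K_def by blast
  have "e * e - e \<in> K"
    unfolding K_def using left_ideal_diff[OF LI left_ideal_mult[OF LI e(1)] e(1)] e(2)
    by (simp add: algebra_simps mult.assoc)
  then have "e * e - e = 0" using K0 by blast
  then have ee: "e * e = e" by simp
  have "range (\<lambda>b. b * e) \<subseteq> L" using left_ideal_mult[OF LI e(1)] by auto
  moreover have "e \<in> range (\<lambda>b. b * e)" by (rule mem_principal_left_ideal)
  moreover have "e \<noteq> 0" using e x0 by auto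
  ultimately have "range (\<lambda>b. b * e) = L"
    using minimal_left_ideal_eq[OF L left_ideal_principal] by blast
  then show ?thesis using that ee e(1) by blast
qed

lemma minimal_left_ideal_right_unit:
  assumes "minimal_left_ideal sc L" "x \<in> L"
  obtains f where "minimal_idempotent sc f" "x * f = x"
proof -
  obtain f where f: "f * f = f" "f \<in> L" "L = range (\<lambda>b. b * f)"
    using minimal_left_ideal_idempotent_generator[OF assms(1)] by blast
  obtain b where "x = b * f" using assms(2) f(3) by blast
  then have "x * f = x" using f(1) by (simp add: mult.assoc)
  then show ?thesis using that f assms(1) unfolding minimal_idempotent_def by simp
qed

text \<open>The new right unit is \<open>e + g - e g\<close>, where the idempotent \<open>g\<close> generates the minimal
  left ideal \<open>A p (1 - e)\<close>.\<close>

lemma socle_right_unit_extend: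
  assumes e: "e \<in> socle sc" "e * e = e" and p: "minimal_idempotent sc p"
  obtains e' where "e' \<in> socle sc" "e' * e' = e'" "p * e' = p" "\<And>q. q * e = q \<Longrightarrow> q * e' = q"
proof (cases "p * e = p")
  case True
  then show ?thesis using that e by blast
next
  case False
  have pmin: "minimal_left_ideal sc (range (\<lambda>b. b * p))"
    using p unfolding minimal_idempotent_def by blast
  define L' where "L' = (\<lambda>y. y * (1 - e)) ` range (\<lambda>b. b * p)"
  have p'L: "p - p * e \<in> L'" unfolding L'_def
    by (rule image_eqI[of _ _ p]) (auto simp: algebra_simps intro: range_eqI[of _ _ 1])
  then have "L' \<noteq> {0}" using False by auto
  then have L'min: "minimal_left_ideal sc L'"
    unfolding L'_def by (rule minimal_left_ideal_image_mult_right[OF pmin])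
  obtain g where g: "g * g = g" "g \<in> L'" "L' = range (\<lambda>b. b * g)"
    using minimal_left_ideal_idempotent_generator[OF L'min] by blast
  obtain b where gb: "g = b * p * (1 - e)" using g(2) unfolding L'_def by blast
  have ge: "g * e = 0" unfolding gb using e(2) by (simp add: algebra_simps mult.assoc)
  obtain c where "p - p * e = c * g" using p'L g(3) by blast
  then have p'g: "(p - p * e) * g = p - p * e" using g(1) by (simp add: mult.assoc)
  define e' where "e' = e + g - e * g"
  have "g \<in> socle sc" using g(2) L'min minimal_left_ideal_subset_socle by blast
  then have "e' \<in> socle sc" unfolding e'_def
    using socle_add[OF e(1)] socle_mult_left socle_diff by blast
  moreover have "e' * e' = e'"
  proof -
    have "g * (e * x) = 0" "e * (e * x) = e * x" "g * (g * x) = g * x" for x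
      using ge e(2) g(1) by (simp_all flip: mult.assoc)
    then show ?thesis unfolding e'_def by (simp add: algebra_simps e(2) g(1) ge)
  qed
  moreover have "q * e' = q" if "q * e = q" for q
  proof -
    have "q * (e * x) = q * x" for x using that by (simp flip: mult.assoc)
    then show ?thesis unfolding e'_def by (simp add: algebra_simps that)
  qed
  moreover have "p * e' = p"
    using p'g unfolding e'_def by (simp add: algebra_simps)
  ultimately show ?thesis using that by blast
qed

lemma finite_minimal_idempotents_right_unit:
  assumes "finite P" "\<And>p. p \<in> P \<Longrightarrow> minimal_idempotent sc p"
  obtains e where "e \<in> socle sc" "e * e = e" "\<And>p. p \<in> P \<Longrightarrow> p * e = p"
  using assms
proof (induction P arbitrary: thesis rule: finite_induct)
  case empty
  then show ?case using socle_zero by auto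
next
  case (insert p P)
  then obtain e where e: "e \<in> socle sc" "e * e = e" "\<And>q. q \<in> P \<Longrightarrow> q * e = q"
    by blast
  obtain e' where "e' \<in> socle sc" "e' * e' = e'" "p * e' = p" "\<And>q. q * e = q \<Longrightarrow> q * e' = q"
    using socle_right_unit_extend[OF e(1,2)] insert.prems(2) by blast
  then show ?case using insert.prems(1) e(3) by blast
qed

lemma socle_right_unit_is_left_unit:
  assumes e: "e \<in> socle sc" and right: "\<And>z. z \<in> socle sc \<Longrightarrow> z * e = z"
    and z: "z \<in> socle sc"
  shows "e * z = z"
proof -
  \<comment> \<open>\<open>w = z - e z\<close> satisfies \<open>w A w = w A e w = 0\<close>, so \<open>A w\<close> squares to zero\<close>
  define w where "w = z - e * z"
  have wS: "w \<in> socle sc" unfolding w_def using socle_diff[OF z socle_mult_left[OF z]] .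
  have ee: "e * e = e" using right[OF e] .
  have ew: "e * w = 0" unfolding w_def using ee by (simp add: right_diff_distrib mult.assoc[symmetric])
  have wbw: "w * b * w = 0" for b
  proof -
    have "w * b * w = w * b * e * w" using right[OF socle_mult_right[OF wS]] by simp
    also have "\<dots> = 0" using ew by (simp add: mult.assoc)
    finally show ?thesis .
  qed
  have "x * y = 0" if xy: "x \<in> range (\<lambda>b. b * w)" "y \<in> range (\<lambda>b. b * w)" for x y
  proof -
    obtain b1 b2 where "x = b1 * w" "y = b2 * w" using xy by blast
    then show ?thesis using wbw[of b2] by (simp add: mult.assoc)
  qed
  then have "w = 0"
    using square_zero_left_ideal_eq_zero[OF left_ideal_principal _ mem_principal_left_ideal] by blast
  then show ?thesis unfolding w_def by simp
qed

lemma cfinite_dim_socle_minimal_spanning_set: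
  assumes "cfinite_dim sc (socle sc)"
  obtains G where "finite G" "G \<subseteq> \<Union> {L. minimal_left_ideal sc L}" "socle sc \<subseteq> cspan sc G"
proof -
  obtain F where F: "finite F" "F \<subseteq> socle sc" "socle sc \<subseteq> cspan sc F"
    using assms unfolding cfinite_dim_def by blast
  have "\<exists>G. finite G \<and> G \<subseteq> \<Union> {L. minimal_left_ideal sc L} \<and> x \<in> cspan sc G"
    if x: "x \<in> F" for x
  proof -
    obtain G d where "finite G" "G \<subseteq> \<Union> {L. minimal_left_ideal sc L}" "x = (\<Sum>v\<in>G. sc (d v) v)"
      using x F(2) unfolding socle_def cspan_def by blast
    then show ?thesis unfolding cspan_def by blast
  qed
  then obtain G where G: "\<And>x. x \<in> F \<Longrightarrow>
      finite (G x) \<and> G x \<subseteq> \<Union> {L. minimal_left_ideal sc L} \<and> x \<in> cspan sc (G x)"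
    by metis
  have "F \<subseteq> cspan sc (\<Union> (G ` F))"
  proof
    fix x assume x: "x \<in> F"
    have "G x \<subseteq> cspan sc (\<Union> (G ` F))" using x cspan_base by blast
    then show "x \<in> cspan sc (\<Union> (G ` F))" using G[OF x] cspan_subset_cspan by blast
  qed
  then have "socle sc \<subseteq> cspan sc (\<Union> (G ` F))" using F(3) cspan_subset_cspan by blast
  moreover have "finite (\<Union> (G ` F))" "\<Union> (G ` F) \<subseteq> \<Union> {L. minimal_left_ideal sc L}"
    using F(1) G by auto
  ultimately show ?thesis using that by blast
qed

lemma cfinite_dim_socle_unit:
  assumes "cfinite_dim sc (socle sc)"
  obtains e where "e \<in> socle sc" "\<And>z. z \<in> socle sc \<Longrightarrow> e * z = z \<and> z * e = z"
proof -
  obtain G where G: "finite G" "G \<subseteq> \<Union> {L. minimal_left_ideal sc L}" "socle sc \<subseteq> cspan sc G"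
    using cfinite_dim_socle_minimal_spanning_set[OF assms] by blast
  have "\<exists>f. minimal_idempotent sc f \<and> g * f = g" if g: "g \<in> G" for g
  proof -
    obtain L where "minimal_left_ideal sc L" "g \<in> L" using G(2) g by blast
    then show ?thesis using minimal_left_ideal_right_unit by blast
  qed
  then obtain p where p: "\<And>g. g \<in> G \<Longrightarrow> minimal_idempotent sc (p g) \<and> g * p g = g"
    by metis
  have pmin: "\<And>q. q \<in> p ` G \<Longrightarrow> minimal_idempotent sc q" using p by blast
  obtain e where e: "e \<in> socle sc" "e * e = e" "\<And>q. q \<in> p ` G \<Longrightarrow> q * e = q"
    using finite_minimal_idempotents_right_unit[OF finite_imageI[OF G(1)] pmin] by metis
  have "g * e = g" if g: "g \<in> G" for g
  proof -
    have gp: "g * p g = g" and pe: "p g * e = p g" using p[OF g] e(3) g by auto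
    have "g * e = g * (p g * e)" by (subst gp[symmetric]) (simp only: mult.assoc)
    then show ?thesis by (simp only: pe gp)
  qed
  then have "cspan sc G \<subseteq> {s. s * e = s}"
    by (intro cspan_minimal) (auto simp: distrib_right sc_mult_left[symmetric])
  then have right: "z * e = z" if z: "z \<in> socle sc" for z using G(3) z by blast
  have "e * z = z \<and> z * e = z" if z: "z \<in> socle sc" for z
    using right[OF z] socle_right_unit_is_left_unit[OF e(1) right z] by blast
  with e(1) show ?thesis by (rule that)
qed

lemma socle_sandwich_finite_span:
  assumes "a \<in> socle sc"
  obtains Q where "finite Q" "\<And>z. a * z * a \<in> cspan sc Q"
proof -
  obtain F d where F: "finite F" "F \<subseteq> \<Union> {L. minimal_left_ideal sc L}" "a = (\<Sum>v\<in>F. sc (d v) v)"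
    using assms unfolding socle_def cspan_def by blast
  have "\<exists>f. minimal_idempotent sc f \<and> v * f = v" if v: "v \<in> F" for v
  proof -
    obtain L where "minimal_left_ideal sc L" "v \<in> L" using F(2) v by blast
    then show ?thesis using minimal_left_ideal_right_unit by blast
  qed
  then obtain p where p: "\<And>v. v \<in> F \<Longrightarrow> minimal_idempotent sc (p v) \<and> v * p v = v"
    by metis
  have "\<exists>W. \<forall>y. \<exists>c. p w * y * p v = sc c W" if "w \<in> F" "v \<in> F" for w v
    using minimal_idempotents_corner_one_dim[of "p v" "p w"] p that by blast
  then obtain W where W: "\<And>w v y. w \<in> F \<Longrightarrow> v \<in> F \<Longrightarrow> \<exists>c. p w * y * p v = sc c (W w v)"
    by metis
  define av where "av v = sc (d v) v" for v
  have avp: "av v * p v = av v" if "v \<in> F" for v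
    unfolding av_def using p[OF that] by (simp add: sc_mult_left[symmetric])
  define Q where "Q = (\<lambda>(w, v). av w * W w v) ` (F \<times> F)"
  have "a * z * a \<in> cspan sc Q" for z
  proof -
    have "a * z * a = (\<Sum>v\<in>F. \<Sum>w\<in>F. av w * z * av v)"
      unfolding F(3) av_def[symmetric] by (simp add: sum_distrib_left sum_distrib_right)
    also have "\<dots> \<in> cspan sc Q"
    proof (intro cspan_sum)
      fix v w assume vw: "v \<in> F" "w \<in> F"
      obtain c where c: "p w * (z * av v) * p v = sc c (W w v)" using W[OF vw(2,1)] by blast
      have "av w * z * av v = av w * (p w * (z * av v) * p v)"
        using avp[OF vw(1)] avp[OF vw(2)] by (metis mult.assoc)
      also have "\<dots> = sc c (av w * W w v)" using c by (simp add: sc_mult_right)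
      finally show "av w * z * av v \<in> cspan sc Q"
        using vw unfolding Q_def by (force intro: cspan_sc cspan_base)
    qed
    finally show ?thesis .
  qed
  moreover have "finite Q" unfolding Q_def using F(1) by simp
  ultimately show ?thesis using that by blast
qed

lemma socle_cfinite_dim_if_not_zero_divisor:
  assumes a: "a \<in> socle sc"
    and nzd: "\<And>z. z \<in> socle sc \<Longrightarrow> z \<noteq> 0 \<Longrightarrow> a * z \<noteq> 0 \<and> z * a \<noteq> 0"
  shows "cfinite_dim sc (socle sc)"
proof -
  obtain Q where Q: "finite Q" "\<And>z. a * z * a \<in> cspan sc Q"
    using socle_sandwich_finite_span[OF a] by blast
  have "inj_on (\<lambda>z. a * z * a) (socle sc)"
  proof (rule inj_onI)
    fix z z' assume z: "z \<in> socle sc" "z' \<in> socle sc" "a * z * a = a * z' * a"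
    then have "a * ((z - z') * a) = 0" by (simp add: algebra_simps)
    then have "z - z' = 0"
      using nzd[OF socle_mult_right[OF socle_diff[OF z(1,2)]]] nzd[OF socle_diff[OF z(1,2)]]
      by auto
    then show "z = z'" by simp
  qed
  moreover have "linear (\<lambda>z. a * z * a)" by (rule linearI) (simp_all add: algebra_simps)
  ultimately show ?thesis
    using cfinite_dim_if_inj_linear_into_cspan[OF _ _ subspace_socle Q(1)] Q(2) by blast
qed

end

lemma unit_not_topological_divisor_of_zero_in:
  fixes e :: "'a::real_normed_algebra_1"
  assumes "\<And>z. z \<in> B \<Longrightarrow> e * z = z \<and> z * e = z"
  shows "\<not> topological_divisor_of_zero_in B e"
proof
  assume "topological_divisor_of_zero_in B e"
  then obtain z where z: "\<And>n. z n \<in> B \<and> norm (z n) = 1"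
    and "(\<lambda>n. e * z n) \<longlonglongrightarrow> 0 \<or> (\<lambda>n. z n * e) \<longlonglongrightarrow> 0"
    unfolding topological_divisor_of_zero_in_def by blast
  moreover have "(\<lambda>n. e * z n) = z" "(\<lambda>n. z n * e) = z" using assms z by auto
  ultimately have "z \<longlonglongrightarrow> 0" by auto
  then have "(\<lambda>n. norm (z n)) \<longlonglongrightarrow> 0" by (rule tendsto_norm_zero)
  then show False using z by (simp add: LIMSEQ_const_iff)
qed

lemma zero_divisor_topological_divisor_of_zero_in:
  fixes a :: "'a::real_normed_algebra_1"
  assumes "\<And>r z. z \<in> B \<Longrightarrow> r *\<^sub>R z \<in> B" and "z \<in> B" "z \<noteq> 0" "a * z = 0 \<or> z * a = 0"
  shows "topological_divisor_of_zero_in B a"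
  unfolding topological_divisor_of_zero_in_def
  using assms by (intro exI[of _ "\<lambda>n. (1 / norm z) *\<^sub>R z"]) auto

theorem theorem1p9:
  fixes sc :: "complex \<Rightarrow> 'a::{banach,real_normed_algebra_1} \<Rightarrow> 'a"
  assumes "complex_banach_algebra_1 sc"
    and "semisimple sc"
  shows "\<not> cfinite_dim sc (socle sc) \<longleftrightarrow>
         (\<forall>a\<in>socle sc. topological_divisor_of_zero_in (socle sc) a)"
proof -
  interpret semisimple_banach_algebra sc using assms by unfold_locales
  show ?thesis
  proof
    assume infinite: "\<not> cfinite_dim sc (socle sc)"
    show "\<forall>a\<in>socle sc. topological_divisor_of_zero_in (socle sc) a"
    proof
      fix a assume a: "a \<in> socle sc"
      then obtain z where "z \<in> socle sc" "z \<noteq> 0" "a * z = 0 \<or> z * a = 0"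
        using socle_cfinite_dim_if_not_zero_divisor infinite by blast
      then show "topological_divisor_of_zero_in (socle sc) a"
        by (intro zero_divisor_topological_divisor_of_zero_in socle_scaleR)
    qed
  next
    assume tdz: "\<forall>a\<in>socle sc. topological_divisor_of_zero_in (socle sc) a"
    show "\<not> cfinite_dim sc (socle sc)"
    proof
      assume "cfinite_dim sc (socle sc)"
      then obtain e where "e \<in> socle sc" "\<And>z. z \<in> socle sc \<Longrightarrow> e * z = z \<and> z * e = z"
        using cfinite_dim_socle_unit by blast
      then show False using tdz unit_not_topological_divisor_of_zero_in by blast
    qed
  qed
qed

end
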